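(* Let $\mathcal{G}^{\mathbb{c}}=(\mathbb{C},\mathbb{E}^{\mathbb{c}})$ be a C-DMG and $\mathbb{C}_\mathbb{X},\mathbb{C}_\mathbb{Y},\mathbb{C}_\mathbb{Z},\mathbb{C}_\mathbb{W}$ pairwise disjoint subsets of $\mathbb{C}$; for a compatible ADMG let $\mathbb{X},\mathbb{Y},\mathbb{Z},\mathbb{W}$ denote the unions of the clusters in $\mathbb{C}_\mathbb{X},\mathbb{C}_\mathbb{Y},\mathbb{C}_\mathbb{Z},\mathbb{C}_\mathbb{W}$ respectively. Assume that either (i) the sizes of the clusters are unknown (compatible ADMGs may have clusters of any nonempty sizes), or (ii) every cluster contains more than one variable. Then: (1) if $\mathbb{C}_\mathbb{Y}$ and $\mathbb{C}_\mathbb{X}$ are not d-separated by $\mathbb{C}_\mathbb{Z}\cup\mathbb{C}_\mathbb{W}$ in $\mathcal{G}^{\mathbb{c}}_{\overline{\mathbb{C}_\mathbb{Z}}}$, there exists a compatible ADMG $\mathcal{G}$ in which $\mathbb{Y}$ and $\mathbb{X}$ are not d-separated by $\mathbb{Z}\cup\mathbb{W}$ in $\mathcal{G}_{\overline{\mathbb{Z}}}$; (2) if $\mathbb{C}_\mathbb{Y}$ and $\mathbb{C}_\mathbb{X}$ are not d-separated by $\mathbb{C}_\mathbb{Z}\cup\mathbb{C}_\mathbb{W}$ in $\mathcal{G}^{\mathbb{c}}_{\overline{\mathbb{C}_\mathbb{Z}}\underline{\mathbb{C}_\mathbb{X}}}$, there exists a compatible ADMG $\mathcal{G}$ in which $\mathbb{Y}$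 and $\mathbb{X}$ are not d-separated by $\mathbb{Z}\cup\mathbb{W}$ in $\mathcal{G}_{\overline{\mathbb{Z}}\underline{\mathbb{X}}}$; (3) if $\mathbb{C}_\mathbb{Y}$ and $\mathbb{C}_\mathbb{X}$ are not d-separated by $\mathbb{C}_\mathbb{Z}\cup\mathbb{C}_\mathbb{W}$ in $\mathcal{G}^{\mathbb{c}}_{\overline{\mathbb{C}_\mathbb{Z}}\,\overline{\mathbb{C}_\mathbb{X}(\mathbb{C}_\mathbb{W})}}$, there exists a compatible ADMG $\mathcal{G}$ in which $\mathbb{Y}$ and $\mathbb{X}$ are not d-separated by $\mathbb{Z}\cup\mathbb{W}$ in $\mathcal{G}_{\overline{\mathbb{Z}}\,\overline{\mathbb{X}(\mathbb{W})}}$. That is, whenever one of the three do-calculus rules does not apply in $\mathcal{G}^{\mathbb{c}}$, there is a compatible ADMG in which the corresponding classical do-calculus rule does not apply.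
   Context: An ADMG is a graph with directed and bidirected edges whose directed edges form no directed cycle. A C-DMG $\mathcal{G}^{\mathbb{c}}=(\mathbb{C},\mathbb{E}^{\mathbb{c}})$ compatible with an ADMG $\mathcal{G}=(\mathbb{V},\mathbb{E})$ has as vertex set a partition $\mathbb{C}$ of $\mathbb{V}$ into clusters, with $C_i\rightarrow C_j$ (resp. $C_i\leftrightarrow C_j$), possibly $i=j$, an edge iff some $X\in C_i$, $Y\in C_j$ have $X\rightarrow Y$ (resp. $X\leftrightarrow Y$) in $\mathcal{G}$; C-DMGs may have directed cycles and self-loops. For a graph $\mathcal{G}^*$ and vertex sets $\mathbb{A},\mathbb{B}$, $\mathcal{G}^*_{\overline{\mathbb{A}}\underline{\mathbb{B}}}$ is obtained by removing all edges coming into $\mathbb{A}$ (directed edges with head in $\mathbb{A}$ and bidirected edges with an endpoint in $\mathbb{A}$) and all directed edges going out of $\mathbb{B}$. $\mathbb{C}_\mathbb{X}(\mathbb{C}_\mathbb{W})$ is the set of vertices of $\mathbb{C}_\mathbb{X}$ that are not ancestors of any vertex of $\mathbb{C}_\mathbb{W}$ in $\mathcal{G}^{\mathbb{c}}_{\overline{\mathbb{C}_\mathbb{Z}}}$; similarly $\mathbb{X}(\mathbb{W})$ is the set of vertices of $\mathbb{X}$ that are not ancestors of any vertex of $\mathbb{W}$ in $\mathcal{G}_{\overline{\mathbb{Z}}}$. Ancestors/descendants include the vertex itself. A walk $\langle V_1,\dots,V_n\rangle$ is blocked by $\mathbb{W}^*$ if $V_1\in\mathbb{W}^*$ or $V_n\in\mathbb{W}^*$;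 or for some $1<i<n$ the walk contains $V_{i-1}\,*\!-\!*\,V_i\rightarrow V_{i+1}$ or $V_{i-1}\leftarrow V_i\,*\!-\!*\,V_{i+1}$ (any edge type for $*\!-\!*$) with $V_i\in\mathbb{W}^*$; or for some $1<i<n$ it contains $V_{i-1}\,*\!\!\rightarrow V_i\leftarrow\!\!*\,V_{i+1}$ (edges directed into $V_i$ or bidirected) with no descendant of $V_i$ in $\mathbb{W}^*$. A path is a walk without repeated vertices; $\mathbb{W}^*$ d-separates $\mathbb{X}^*$ and $\mathbb{Y}^*$ if it blocks every path between a vertex of $\mathbb{X}^*$ and a vertex of $\mathbb{Y}^*$. *)

theory Defs
  imports Main
begin

text \<open>Mixed graphs: a vertex set, directed edges (u,v) meaning u -> v,
  bidirected edges (stored symmetrically).\<close>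
record 'a mgraph =
  verts :: "'a set"
  dir :: "('a \<times> 'a) set"
  bid :: "('a \<times> 'a) set"

text \<open>Kind of the edge between consecutive vertices V_i, V_(i+1) of a walk:
  Fwd: V_i -> V_(i+1); Bwd: V_i <- V_(i+1); Bi: V_i <-> V_(i+1).\<close>
datatype ekind = Fwd | Bwd | Bi

definition walk :: "'a mgraph \<Rightarrow> 'a list \<Rightarrow> ekind list \<Rightarrow> bool" where
  "walk G vs es \<longleftrightarrow> vs \<noteq> [] \<and> set vs \<subseteq> verts G \<and> length es = length vs - 1 \<and>
     (\<forall>i<length es. (case es ! i of
         Fwd \<Rightarrow> (vs ! i, vs ! Suc i) \<in> dir G
       | Bwd \<Rightarrow> (vs ! Suc i, vs ! i) \<in> dir G
       | Bi \<Rightarrow> (vs ! i, vs ! Suc i) \<in> bid G))"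

definition path :: "'a mgraph \<Rightarrow> 'a list \<Rightarrow> ekind list \<Rightarrow> bool" where
  "path G vs es \<longleftrightarrow> walk G vs es \<and> distinct vs"

definition desc :: "'a mgraph \<Rightarrow> 'a \<Rightarrow> 'a set" where
  "desc G v = {u. (v, u) \<in> (dir G)\<^sup>*}"

definition blocked :: "'a mgraph \<Rightarrow> 'a set \<Rightarrow> 'a list \<Rightarrow> ekind list \<Rightarrow> bool" where
  "blocked G W vs es \<longleftrightarrow> hd vs \<in> W \<or> last vs \<in> W \<or>
     (\<exists>i. 0 < i \<and> i < length vs - 1 \<and>
        (((es ! i = Fwd \<or> es ! (i - 1) = Bwd) \<and> vs ! i \<in> W) \<or>
         (es ! (i - 1) \<in> {Fwd, Bi} \<and> es ! i \<in> {Bwd, Bi} \<and> desc G (vs ! i) \<inter> W = {})))"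

definition dsep :: "'a mgraph \<Rightarrow> 'a set \<Rightarrow> 'a set \<Rightarrow> 'a set \<Rightarrow> bool" where
  "dsep G X Y W \<longleftrightarrow>
     (\<forall>vs es. path G vs es \<and> hd vs \<in> X \<and> last vs \<in> Y \<longrightarrow> blocked G W vs es)"

definition mutilate :: "'a mgraph \<Rightarrow> 'a set \<Rightarrow> 'a set \<Rightarrow> 'a mgraph" where
  "mutilate G A B = G\<lparr>dir := {(u, v) \<in> dir G. v \<notin> A \<and> u \<notin> B},
                      bid := {(u, v) \<in> bid G. u \<notin> A \<and> v \<notin> A}\<rparr>"

definition nonanc :: "'a mgraph \<Rightarrow> 'a set \<Rightarrow> 'a set \<Rightarrow> 'a set" where
  "nonanc G S T = {x \<in> S. \<forall>w\<in>T. (x, w) \<notin> (dir G)\<^sup>*}"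

definition admg :: "'a mgraph \<Rightarrow> bool" where
  "admg G \<longleftrightarrow> finite (verts G) \<and> dir G \<subseteq> verts G \<times> verts G \<and>
     bid G \<subseteq> verts G \<times> verts G \<and> sym (bid G) \<and> (\<forall>x. (x, x) \<notin> bid G) \<and>
     acyclic (dir G)"

definition cdmg :: "'c mgraph \<Rightarrow> bool" where
  "cdmg Gc \<longleftrightarrow> finite (verts Gc) \<and> dir Gc \<subseteq> verts Gc \<times> verts Gc \<and>
     bid Gc \<subseteq> verts Gc \<times> verts Gc \<and> sym (bid Gc)"

text \<open>ADMGs over vertices (c, i): the vertex (c, i) belongs to cluster c.
  Compatibility: the clusters {v. fst v = c} (c a cluster) are nonempty and partition
  the vertex set, and cluster edges are exactly the images of variable edges.\<close>
definition compatible :: "'c mgraph \<Rightarrow> ('c \<times> nat) mgraph \<Rightarrow> bool" where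
  "compatible Gc G \<longleftrightarrow> admg G \<and> fst ` verts G = verts Gc \<and>
     dir Gc = map_prod fst fst ` dir G \<and> bid Gc = map_prod fst fst ` bid G"

definition members :: "('c \<times> nat) mgraph \<Rightarrow> 'c set \<Rightarrow> ('c \<times> nat) set" where
  "members G S = {v \<in> verts G. fst v \<in> S}"

text \<open>Cluster size regime: multi = False is case (i) (any nonempty sizes);
  multi = True is case (ii) (every cluster has more than one variable).\<close>
definition size_ok :: "bool \<Rightarrow> 'c mgraph \<Rightarrow> ('c \<times> nat) mgraph \<Rightarrow> bool" where
  "size_ok multi Gc G \<longleftrightarrow> (multi \<longrightarrow> (\<forall>c\<in>verts Gc. card {v \<in> verts G. fst v = c} \<ge> 2))"

end

theory Submission imports Defs begin

text \<open>Unroll the C-DMG in time: the ADMG has variables (C, t) for t < N, a directed edge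
  (C, t) \<rightarrow> (D, t + 1) for every C \<rightarrow> D and all bidirected edges (C, s) \<leftrightarrow> (D, t) for every
  C \<leftrightarrow> D.  Time increases along directed edges, so it is acyclic; it is compatible and every
  cluster has N \<ge> 2 variables.  An unblocked cluster path lifts to an unblocked path of the
  unrolled graph by letting time go up along forward edges, down along backward ones, and stay
  put along bidirected ones.  Directed reachability between clusters is witnessed by at most as
  many steps as there are cluster edges, so it lifts too once N leaves that much room above
  the times used.  This lifts the
  descendant paths that open colliders, and it shows that below that height a variable (C, t)
  lies in \<open>X(W)\<close> only if C lies in \<open>C\<^sub>X(C\<^sub>W)\<close>, so mutilating the unrolled graph
  removes no lifted edge of the path.\<close>

lemma relpow_lift_time:
  assumes step: "\<And>u v t. (u, v) \<in> R \<Longrightarrow> Suc t < N \<Longrightarrow> ((u, t), (v, Suc t)) \<in> R'"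
    and "(u, v) \<in> R ^^ k" and "s + k < N"
  shows "((u, s), (v, s + k)) \<in> R'\<^sup>*"
  using assms(2,3)
proof (induction k arbitrary: v)
  case 0
  then show ?case by simp
next
  case (Suc k)
  then obtain w where "(u, w) \<in> R ^^ k" and "(w, v) \<in> R" by auto
  with Suc have "((u, s), (w, s + k)) \<in> R'\<^sup>*" and "((w, s + k), (v, Suc (s + k))) \<in> R'"
    using step by simp_all
  then show ?case by simp
qed

lemma rtrancl_lift_time:
  assumes step: "\<And>u v t. (u, v) \<in> R \<Longrightarrow> Suc t < N \<Longrightarrow> ((u, t), (v, Suc t)) \<in> R'"
    and "finite R" and "(u, w) \<in> R\<^sup>*" and "s + card R < N"
  shows "\<exists>t<N. ((u, s), (w, t)) \<in> R'\<^sup>*"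
proof -
  obtain k where "k \<le> card R" and "(u, w) \<in> R ^^ k"
    using assms(2,3) rtrancl_finite_eq_relpow by blast
  with assms(4) show ?thesis
    using relpow_lift_time[OF step] by (intro exI[of _ "s + k"]) auto
qed

text \<open>Forward minus backward edges before position i, shifted by \<open>length es\<close> so that the
  truncated subtraction never cuts off.\<close>
definition walk_time :: "ekind list \<Rightarrow> nat \<Rightarrow> nat" where
  "walk_time es i = length es + length (filter (\<lambda>e. e = Fwd) (take i es))
      - length (filter (\<lambda>e. e = Bwd) (take i es))"

lemma length_filter_take_le: "length (filter P (take i xs)) \<le> length xs"
  by (rule le_trans[OF length_filter_le]) simp

lemma walk_time_le: "walk_time es i \<le> 2 * length es"
  using length_filter_take_le[of "\<lambda>e. e = Fwd" i es] unfolding walk_time_def by linarith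

lemma walk_time_Suc:
  assumes "i < length es"
  shows "es ! i = Fwd \<Longrightarrow> walk_time es (Suc i) = Suc (walk_time es i)"
    and "es ! i = Bwd \<Longrightarrow> walk_time es i = Suc (walk_time es (Suc i))"
    and "es ! i = Bi \<Longrightarrow> walk_time es (Suc i) = walk_time es i"
  using assms length_filter_take_le[of "\<lambda>e. e = Bwd" i es]
    length_filter_take_le[of "\<lambda>e. e = Bwd" "Suc i" es]
  by (auto simp: walk_time_def take_Suc_conv_app_nth)

definition lift_walk :: "'c list \<Rightarrow> ekind list \<Rightarrow> ('c \<times> nat) list" where
  "lift_walk vs es = map (\<lambda>i. (vs ! i, walk_time es i)) [0..<length vs]"

lemma length_lift_walk [simp]: "length (lift_walk vs es) = length vs"
  by (simp add: lift_walk_def)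

lemma nth_lift_walk [simp]: "i < length vs \<Longrightarrow> lift_walk vs es ! i = (vs ! i, walk_time es i)"
  by (simp add: lift_walk_def)

lemma map_fst_lift_walk: "map fst (lift_walk vs es) = vs"
  by (simp add: lift_walk_def comp_def map_nth)

lemma lift_walk_eq_Nil_iff [simp]: "lift_walk vs es = [] \<longleftrightarrow> vs = []"
  by (simp add: lift_walk_def)

lemma hd_lift_walk: "vs \<noteq> [] \<Longrightarrow> hd (lift_walk vs es) = (hd vs, walk_time es 0)"
  by (simp add: hd_conv_nth)

lemma last_lift_walk:
  "vs \<noteq> [] \<Longrightarrow> last (lift_walk vs es) = (last vs, walk_time es (length vs - 1))"
  by (simp add: last_conv_nth)

definition unrolls_into :: "'c mgraph \<Rightarrow> ('c \<times> nat) mgraph \<Rightarrow> nat \<Rightarrow> bool" where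
  "unrolls_into Hc H N \<longleftrightarrow>
     (\<forall>u\<in>verts Hc. \<forall>s<N. (u, s) \<in> verts H) \<and>
     (\<forall>u v s. (u, v) \<in> dir Hc \<longrightarrow> Suc s < N \<longrightarrow> ((u, s), (v, Suc s)) \<in> dir H) \<and>
     (\<forall>u v s t. (u, v) \<in> bid Hc \<longrightarrow> s < N \<longrightarrow> t < N \<longrightarrow> u \<noteq> v \<longrightarrow> ((u, s), (v, t)) \<in> bid H)"

lemma unrolls_into_verts:
  "unrolls_into Hc H N \<Longrightarrow> u \<in> verts Hc \<Longrightarrow> s < N \<Longrightarrow> (u, s) \<in> verts H"
  by (simp add: unrolls_into_def)

lemma unrolls_into_dir:
  "unrolls_into Hc H N \<Longrightarrow> (u, v) \<in> dir Hc \<Longrightarrow> Suc s < N \<Longrightarrow> ((u, s), (v, Suc s)) \<in> dir H"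
  by (simp add: unrolls_into_def)

lemma unrolls_into_bid:
  "unrolls_into Hc H N \<Longrightarrow> (u, v) \<in> bid Hc \<Longrightarrow> u \<noteq> v \<Longrightarrow> s < N \<Longrightarrow> t < N \<Longrightarrow>
     ((u, s), (v, t)) \<in> bid H"
  by (simp add: unrolls_into_def)

lemma walk_lift_walk:
  assumes H: "unrolls_into Hc H N" and w: "walk Hc vs es" and "distinct vs"
    and N: "2 * length es < N"
  shows "walk H (lift_walk vs es) es"
  unfolding walk_def
proof (intro conjI allI impI)
  have len: "length vs = Suc (length es)" using w by (auto simp: walk_def)
  have time: "walk_time es i < N" for i using walk_time_le[of es i] N by linarith
  show "lift_walk vs es \<noteq> []" and "length es = length (lift_walk vs es) - 1"
    using len by auto
  show "set (lift_walk vs es) \<subseteq> verts H"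
  proof
    fix x assume "x \<in> set (lift_walk vs es)"
    then obtain i where "i < length vs" and x: "x = (vs ! i, walk_time es i)"
      by (auto simp: in_set_conv_nth)
    with w have "vs ! i \<in> verts Hc" by (auto simp: walk_def)
    then show "x \<in> verts H" unfolding x using unrolls_into_verts[OF H] time by blast
  qed
  fix i assume i: "i < length es"
  have edge: "case es ! i of
       Fwd \<Rightarrow> (vs ! i, vs ! Suc i) \<in> dir Hc
     | Bwd \<Rightarrow> (vs ! Suc i, vs ! i) \<in> dir Hc
     | Bi \<Rightarrow> (vs ! i, vs ! Suc i) \<in> bid Hc" using w i by (simp add: walk_def)
  have lifted: "lift_walk vs es ! i = (vs ! i, walk_time es i)"
    "lift_walk vs es ! Suc i = (vs ! Suc i, walk_time es (Suc i))"
    using i len by simp_all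
  show "case es ! i of
       Fwd \<Rightarrow> (lift_walk vs es ! i, lift_walk vs es ! Suc i) \<in> dir H
     | Bwd \<Rightarrow> (lift_walk vs es ! Suc i, lift_walk vs es ! i) \<in> dir H
     | Bi \<Rightarrow> (lift_walk vs es ! i, lift_walk vs es ! Suc i) \<in> bid H"
  proof (cases "es ! i")
    case Fwd
    with edge walk_time_Suc(1)[OF i] time[of "Suc i"] show ?thesis
      by (simp add: lifted unrolls_into_dir[OF H])
  next
    case Bwd
    with edge walk_time_Suc(2)[OF i] time[of i] show ?thesis
      by (simp add: lifted unrolls_into_dir[OF H])
  next
    case Bi
    moreover have "vs ! i \<noteq> vs ! Suc i"
      using \<open>distinct vs\<close> i len by (simp add: nth_eq_iff_index_eq)
    ultimately show ?thesis
      using edge time[of i] time[of "Suc i"] by (simp add: lifted unrolls_into_bid[OF H])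
  qed
qed

lemma path_lift_walk:
  assumes "unrolls_into Hc H N" and "path Hc vs es" and "2 * length es < N"
  shows "path H (lift_walk vs es) es"
  using assms walk_lift_walk[of Hc H N vs es] distinct_map[of fst "lift_walk vs es"]
  by (auto simp: path_def map_fst_lift_walk)

lemma unblocked_lift_walk:
  assumes H: "unrolls_into Hc H N" and w: "walk Hc vs es"
    and nb: "\<not> blocked Hc Wc vs es"
    and fin: "finite (dir Hc)" and N: "2 * length es + card (dir Hc) < N"
    and W_proj: "\<And>u s. (u, s) \<in> Wv \<Longrightarrow> u \<in> Wc"
    and W_lift: "\<And>u s. u \<in> Wc \<Longrightarrow> s < N \<Longrightarrow> (u, s) \<in> Wv"
  shows "\<not> blocked H Wv (lift_walk vs es) es"
proof -
  have ne: "vs \<noteq> []" using w by (simp add: walk_def)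
  have desc_lift: "desc H (vs ! i, walk_time es i) \<inter> Wv \<noteq> {}"
    if collider: "desc Hc (vs ! i) \<inter> Wc \<noteq> {}" for i
  proof -
    obtain w where "w \<in> Wc" and "(vs ! i, w) \<in> (dir Hc)\<^sup>*"
      using collider unfolding desc_def by blast
    moreover have "walk_time es i + card (dir Hc) < N"
      using walk_time_le[of es i] N by linarith
    ultimately obtain t where "t < N" and "((vs ! i, walk_time es i), (w, t)) \<in> (dir H)\<^sup>*"
      using rtrancl_lift_time[OF unrolls_into_dir[OF H] fin] by blast
    with \<open>w \<in> Wc\<close> W_lift show ?thesis by (auto simp: desc_def)
  qed
  have "hd (lift_walk vs es) \<notin> Wv" and "last (lift_walk vs es) \<notin> Wv"
    using nb ne W_proj by (auto simp: blocked_def hd_lift_walk last_lift_walk)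
  moreover have "lift_walk vs es ! i \<notin> Wv"
    if "0 < i" and "i < length vs - 1" and "es ! i = Fwd \<or> es ! (i - 1) = Bwd" for i
    using nb that W_proj[of "vs ! i"] unfolding blocked_def by auto
  moreover have "desc H (lift_walk vs es ! i) \<inter> Wv \<noteq> {}"
    if "0 < i" and "i < length vs - 1" and "es ! (i - 1) \<in> {Fwd, Bi}" and "es ! i \<in> {Bwd, Bi}"
    for i
    using nb that desc_lift[of i] unfolding blocked_def by auto
  ultimately show ?thesis unfolding blocked_def by auto
qed

definition unroll :: "'c mgraph \<Rightarrow> nat \<Rightarrow> ('c \<times> nat) mgraph" where
  "unroll Gc N = \<lparr>verts = verts Gc \<times> {..<N},
     dir = {((c, t), (d, t')). (c, d) \<in> dir Gc \<and> t' = Suc t \<and> t' < N},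
     bid = {((c, t), (d, t')). (c, d) \<in> bid Gc \<and> t < N \<and> t' < N \<and> (c, t) \<noteq> (d, t')}\<rparr>"

lemma unroll_simps:
  "verts (unroll Gc N) = verts Gc \<times> {..<N}"
  "((c, t), (d, t')) \<in> dir (unroll Gc N) \<longleftrightarrow> (c, d) \<in> dir Gc \<and> t' = Suc t \<and> t' < N"
  "((c, t), (d, t')) \<in> bid (unroll Gc N) \<longleftrightarrow>
     (c, d) \<in> bid Gc \<and> t < N \<and> t' < N \<and> (c, t) \<noteq> (d, t')"
  by (auto simp: unroll_def)

lemma members_unroll:
  "v \<in> members (unroll Gc N) S \<longleftrightarrow> fst v \<in> S \<and> fst v \<in> verts Gc \<and> snd v < N"
  by (cases v) (auto simp: members_def unroll_def)

lemma dir_unroll_image: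
  assumes "2 \<le> N"
  shows "map_prod fst fst ` dir (unroll Gc N) = dir Gc"
proof
  show "dir Gc \<subseteq> map_prod fst fst ` dir (unroll Gc N)"
  proof clarify
    fix c d assume "(c, d) \<in> dir Gc"
    with assms have "((c, 0), (d, 1)) \<in> dir (unroll Gc N)" by (simp add: unroll_simps)
    then show "(c, d) \<in> map_prod fst fst ` dir (unroll Gc N)" by (rule rev_image_eqI) simp
  qed
qed (auto simp: unroll_def)

lemma bid_unroll_image:
  assumes "2 \<le> N"
  shows "map_prod fst fst ` bid (unroll Gc N) = bid Gc"
proof
  show "bid Gc \<subseteq> map_prod fst fst ` bid (unroll Gc N)"
  proof clarify
    fix c d assume "(c, d) \<in> bid Gc"
    with assms have "((c, 0), (d, 1)) \<in> bid (unroll Gc N)" by (simp add: unroll_simps)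
    then show "(c, d) \<in> map_prod fst fst ` bid (unroll Gc N)" by (rule rev_image_eqI) simp
  qed
qed (auto simp: unroll_def)

lemma compatible_unroll:
  assumes "cdmg Gc" and "2 \<le> N"
  shows "compatible Gc (unroll Gc N)"
proof -
  have "dir (unroll Gc N) \<subseteq> inv_image less_than snd" by (auto simp: unroll_def)
  then have "acyclic (dir (unroll Gc N))"
    by (meson acyclic_subset wf_acyclic wf_inv_image wf_less_than)
  with assms(1) have "admg (unroll Gc N)"
    by (auto simp: admg_def cdmg_def unroll_def sym_def)
  moreover have "fst ` verts (unroll Gc N) = verts Gc"
    using assms(2) by (simp add: unroll_simps lessThan_empty_iff)
  ultimately show ?thesis
    using dir_unroll_image[OF assms(2), of Gc] bid_unroll_image[OF assms(2), of Gc]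
    by (simp add: compatible_def)
qed

lemma size_ok_unroll:
  assumes "2 \<le> N"
  shows "size_ok multi Gc (unroll Gc N)"
  unfolding size_ok_def
proof (intro impI ballI)
  fix c assume "c \<in> verts Gc"
  then have "{v \<in> verts (unroll Gc N). fst v = c} = Pair c ` {..<N}"
    by (auto simp: unroll_def)
  moreover have "card (Pair c ` {..<N}) = N" by (simp add: card_image inj_on_def)
  ultimately show "2 \<le> card {v \<in> verts (unroll Gc N). fst v = c}" using assms by simp
qed

lemma finite_dir_cdmg: "cdmg Gc \<Longrightarrow> finite (dir Gc)"
  unfolding cdmg_def by (meson finite_SigmaI finite_subset)

lemma dir_mutilate_subset: "dir (mutilate G A B) \<subseteq> dir G"
  by (auto simp: mutilate_def)

lemma finite_dir_mutilate: "cdmg Gc \<Longrightarrow> finite (dir (mutilate Gc A B))"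
  using finite_subset[OF dir_mutilate_subset finite_dir_cdmg] .

lemma card_dir_mutilate_le: "cdmg Gc \<Longrightarrow> card (dir (mutilate Gc A B)) \<le> card (dir Gc)"
  using card_mono[OF finite_dir_cdmg dir_mutilate_subset] .

lemma unrolls_into_mutilate_unroll:
  assumes "cdmg Gc" and "M \<le> N"
    and A: "\<And>u s. (u, s) \<in> A' \<Longrightarrow> s < M \<Longrightarrow> u \<in> A"
    and B: "\<And>u s. (u, s) \<in> B' \<Longrightarrow> s < M \<Longrightarrow> u \<in> B"
  shows "unrolls_into (mutilate Gc A B) (mutilate (unroll Gc N) A' B') M"
  using assms(1,2) A B
  unfolding unrolls_into_def mutilate_def cdmg_def by (fastforce simp: unroll_simps)

lemma nonanc_unroll:
  assumes Gc: "cdmg Gc" and "CW \<subseteq> verts Gc"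
    and "(u, s) \<in> nonanc (mutilate (unroll Gc N) (members (unroll Gc N) CZ) {})
                   (members (unroll Gc N) CX) (members (unroll Gc N) CW)"
    and "s + card (dir Gc) < N"
  shows "u \<in> nonanc (mutilate Gc CZ {}) CX CW"
proof (rule ccontr)
  let ?G = "unroll Gc N"
  let ?R = "dir (mutilate Gc CZ {})"
  assume "u \<notin> nonanc (mutilate Gc CZ {}) CX CW"
  moreover have "u \<in> CX" using assms(3) by (simp add: nonanc_def members_unroll)
  ultimately obtain w where "w \<in> CW" and "(u, w) \<in> ?R\<^sup>*" by (auto simp: nonanc_def)
  have H: "unrolls_into (mutilate Gc CZ {}) (mutilate ?G (members ?G CZ) {}) N"
    using Gc by (rule unrolls_into_mutilate_unroll) (auto simp: members_unroll)
  have "s + card ?R < N"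
    using card_dir_mutilate_le[OF Gc, of CZ "{}"] assms(4) by linarith
  then obtain t where "t < N" and
      "((u, s), (w, t)) \<in> (dir (mutilate ?G (members ?G CZ) {}))\<^sup>*"
    using rtrancl_lift_time[OF unrolls_into_dir[OF H] finite_dir_mutilate[OF Gc] \<open>(u, w) \<in> ?R\<^sup>*\<close>]
    by blast
  with \<open>w \<in> CW\<close> assms(2,3) show False by (auto simp: nonanc_def members_unroll)
qed

lemma not_dsep_unroll:
  fixes Af Bf :: "('c \<times> nat) mgraph \<Rightarrow> ('c \<times> nat) set"
  assumes Gc: "cdmg Gc" and "CZ \<subseteq> verts Gc" and "CW \<subseteq> verts Gc"
    and "\<not> dsep (mutilate Gc A B) CY CX (CZ \<union> CW)"
    and A: "\<And>N u s. (u, s) \<in> Af (unroll Gc N) \<Longrightarrow> s + card (dir Gc) < N \<Longrightarrow> u \<in> A"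
    and B: "\<And>N u s. (u, s) \<in> Bf (unroll Gc N) \<Longrightarrow> s + card (dir Gc) < N \<Longrightarrow> u \<in> B"
  shows "\<exists>G. compatible Gc G \<and> size_ok multi Gc G \<and>
           \<not> dsep (mutilate G (Af G) (Bf G)) (members G CY) (members G CX)
                  (members G CZ \<union> members G CW)"
proof -
  let ?Hc = "mutilate Gc A B"
  obtain vs es where p: "path ?Hc vs es" and "hd vs \<in> CY" and "last vs \<in> CX"
      and nb: "\<not> blocked ?Hc (CZ \<union> CW) vs es"
    using assms(4) unfolding dsep_def by blast
  define M where "M = 2 * length es + card (dir Gc) + 1"
  define N where "N = M + card (dir Gc) + 1"
  define G where "G = unroll Gc N"
  have "2 \<le> N" by (simp add: N_def M_def)
  let ?H = "mutilate G (Af G) (Bf G)"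
  have fin: "finite (dir ?Hc)" and card_le: "card (dir ?Hc) \<le> card (dir Gc)"
    using finite_dir_mutilate[OF Gc] card_dir_mutilate_le[OF Gc] by blast+
  have H: "unrolls_into ?Hc ?H M"
    unfolding G_def
    by (rule unrolls_into_mutilate_unroll[OF Gc]) (auto simp: N_def intro: A B)
  have "path ?H (lift_walk vs es) es"
    using H p by (rule path_lift_walk) (simp add: M_def)
  moreover have "\<not> blocked ?H (members G CZ \<union> members G CW) (lift_walk vs es) es"
    using H _ nb fin
  proof (rule unblocked_lift_walk)
    show "walk ?Hc vs es" using p by (simp add: path_def)
    show "2 * length es + card (dir ?Hc) < M" using card_le by (simp add: M_def)
  qed (use assms(2,3) in \<open>auto simp: G_def N_def members_unroll\<close>)
  moreover have "hd (lift_walk vs es) \<in> members G CY" and "last (lift_walk vs es) \<in> members G CX"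
  proof -
    have "vs \<noteq> []" and "set vs \<subseteq> verts Gc"
      using p by (auto simp: path_def walk_def mutilate_def)
    moreover have "walk_time es i < N" for i
      using walk_time_le[of es i] by (simp add: N_def M_def)
    ultimately show "hd (lift_walk vs es) \<in> members G CY" and "last (lift_walk vs es) \<in> members G CX"
      using \<open>hd vs \<in> CY\<close> \<open>last vs \<in> CX\<close>
      by (auto simp: hd_lift_walk last_lift_walk G_def members_unroll)
  qed
  ultimately have "\<not> dsep ?H (members G CY) (members G CX) (members G CZ \<union> members G CW)"
    unfolding dsep_def by blast
  moreover have "compatible Gc G" and "size_ok multi Gc G"
    using \<open>2 \<le> N\<close> unfolding G_def by (simp_all add: compatible_unroll[OF Gc] size_ok_unroll)
  ultimately show ?thesis by blast
qed

theorem theorem4: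
  fixes Gc :: "'c mgraph" and CX CY CZ CW :: "'c set" and multi :: bool
  assumes "cdmg Gc"
    and "CX \<subseteq> verts Gc" and "CY \<subseteq> verts Gc" and "CZ \<subseteq> verts Gc" and "CW \<subseteq> verts Gc"
    and "CX \<inter> CY = {}" and "CX \<inter> CZ = {}" and "CX \<inter> CW = {}"
    and "CY \<inter> CZ = {}" and "CY \<inter> CW = {}" and "CZ \<inter> CW = {}"
  shows
    "(\<not> dsep (mutilate Gc CZ {}) CY CX (CZ \<union> CW) \<longrightarrow>
       (\<exists>G :: ('c \<times> nat) mgraph. compatible Gc G \<and> size_ok multi Gc G \<and>
          \<not> dsep (mutilate G (members G CZ) {}) (members G CY) (members G CX)
                 (members G CZ \<union> members G CW)))
   \<and> (\<not> dsep (mutilate Gc CZ CX) CY CX (CZ \<union> CW) \<longrightarrow>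
       (\<exists>G :: ('c \<times> nat) mgraph. compatible Gc G \<and> size_ok multi Gc G \<and>
          \<not> dsep (mutilate G (members G CZ) (members G CX)) (members G CY) (members G CX)
                 (members G CZ \<union> members G CW)))
   \<and> (\<not> dsep (mutilate Gc (CZ \<union> nonanc (mutilate Gc CZ {}) CX CW) {}) CY CX (CZ \<union> CW) \<longrightarrow>
       (\<exists>G :: ('c \<times> nat) mgraph. compatible Gc G \<and> size_ok multi Gc G \<and>
          \<not> dsep (mutilate G (members G CZ \<union>
                     nonanc (mutilate G (members G CZ) {}) (members G CX) (members G CW)) {})
                 (members G CY) (members G CX) (members G CZ \<union> members G CW)))"
proof (intro conjI impI)
  assume "\<not> dsep (mutilate Gc CZ {}) CY CX (CZ \<union> CW)"
  with assms(1,4,5) show "\<exists>G. compatible Gc G \<and> size_ok multi Gc G \<and>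
          \<not> dsep (mutilate G (members G CZ) {}) (members G CY) (members G CX)
                 (members G CZ \<union> members G CW)"
    by (rule not_dsep_unroll) (auto simp: members_unroll)
next
  assume "\<not> dsep (mutilate Gc CZ CX) CY CX (CZ \<union> CW)"
  with assms(1,4,5) show "\<exists>G. compatible Gc G \<and> size_ok multi Gc G \<and>
          \<not> dsep (mutilate G (members G CZ) (members G CX)) (members G CY) (members G CX)
                 (members G CZ \<union> members G CW)"
    by (rule not_dsep_unroll) (auto simp: members_unroll)
next
  assume "\<not> dsep (mutilate Gc (CZ \<union> nonanc (mutilate Gc CZ {}) CX CW) {}) CY CX (CZ \<union> CW)"
  with assms(1,4,5) show "\<exists>G. compatible Gc G \<and> size_ok multi Gc G \<and>
          \<not> dsep (mutilate G (members G CZ \<union>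
                     nonanc (mutilate G (members G CZ) {}) (members G CX) (members G CW)) {})
                 (members G CY) (members G CX) (members G CZ \<union> members G CW)"
    by (rule not_dsep_unroll) (auto simp: members_unroll dest: nonanc_unroll[OF assms(1,5)])
qed

end
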